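(* Let $(\mathbf{a}_1,\dots,\mathbf{a}_n)$ be symmetric second-order tensors on $\mathbb{R}^3$. Then: (1) the family is isotropic iff $\mathbf{a}_k'=0$ for all $1\le k\le n$; (2) it is transversely isotropic iff there exists $j$ with $\mathbf{a}_j'\neq0$, $\mathbf{a}_j\times\mathbf{a}_j^2=0$ and $\mathbf{a}_j\times\mathbf{a}_k=0$ for all $1\le k\le n$; (3) it is orthotropic iff $\operatorname{tr}(\mathbf{a}_k\times\mathbf{a}_l)=0$ for all $1\le k,l\le n$, and either there exists $j$ with $\mathbf{a}_j\times\mathbf{a}_j^2\neq0$ or there exists a pair $(i,j)$ with $\mathbf{a}_i\times\mathbf{a}_j\neq0$; (4) it is monoclinic iff there exists a pair $(i,j)$ such that $\boldsymbol{\omega}:=\operatorname{tr}(\mathbf{a}_i\times\mathbf{a}_j)\neq0$ and $(\mathbf{a}_k\boldsymbol{\omega})\times\boldsymbol{\omega}=0$ for all $1\le k\le n$.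
   Context: $SO(3)$ acts on tensors by $(g\star\mathbf{T})(x_1,\dots,x_m)=\mathbf{T}(g^{-1}x_1,\dots,g^{-1}x_m)$. Symmetry group of a family: intersection of $\{g: g\star\mathbf{a}_k=\mathbf{a}_k\}$; symmetry class: its conjugacy class in $SO(3)$. Isotropic $=[SO(3)]$, transversely isotropic $=[O(2)]$, orthotropic $=[\mathbb{D}_2]$, monoclinic $=[\mathbb{Z}_2]$ ($O(2)$: rotations about the $z$-axis together with the rotation by $\pi$ about the $x$-axis; $\mathbb{D}_2$: identity and rotations by $\pi$ about the coordinate axes; $\mathbb{Z}_2$: identity and a rotation by $\pi$). $\mathbf{a}'=\mathbf{a}-\frac13\operatorname{tr}(\mathbf{a})\mathbf{q}$ ($\mathbf{q}$ the identity tensor), $\mathbf{a}^2$ the matrix square, $\mathbf{a}_k\boldsymbol{\omega}$ matrix-vector product. For totally symmetric tensors $\mathbf{S}^1$ of order $p$ and $\mathbf{S}^2$ of order $q$ (vectors being order 1), $\mathbf{S}^1\times\mathbf{S}^2$ is the order $p+q-1$ totally symmetric tensor obtained by totally symmetrizing $\varepsilon_{i_1jk}S^1_{ji_2\cdots i_p}S^2_{ki_{p+1}\cdots i_{p+q-1}}$ ($\varepsilon$ Levi-Civita); for vectors it is the usual cross product. $\operatorname{tr}$ of a totally symmetric tensor is the contraction of two of its indices. *)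

theory Defs
  imports "HOL-Analysis.Analysis" "HOL-Analysis.Cross3"
begin

type_synonym tensor2 = "real^3^3"
type_synonym tensor3 = "real^3^3^3"

text \<open>SO(3) and its action on second-order tensors:
  (g * a)(x,y) = a(g^-1 x, g^-1 y), i.e. g a g^T.\<close>

definition SO3 :: "tensor2 set" where
  "SO3 = {g. rotation_matrix g}"

definition act2 :: "tensor2 \<Rightarrow> tensor2 \<Rightarrow> tensor2" where
  "act2 g a = g ** a ** transpose g"

definition symgroup :: "(nat \<Rightarrow> tensor2) \<Rightarrow> nat \<Rightarrow> tensor2 set" where
  "symgroup a n = {g \<in> SO3. \<forall>k\<in>{1..n}. act2 g (a k) = a k}"

definition conj_SO3 :: "tensor2 set \<Rightarrow> tensor2 set \<Rightarrow> bool" where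
  "conj_SO3 G H \<longleftrightarrow> (\<exists>h\<in>SO3. G = (\<lambda>g. h ** g ** transpose h) ` H)"

definition diag3 :: "real \<Rightarrow> real \<Rightarrow> real \<Rightarrow> tensor2" where
  "diag3 x y z = (\<chi> i j. if i = j then (if i = 1 then x else if i = 2 then y else z) else 0)"

definition rotz :: "real \<Rightarrow> tensor2" where
  "rotz t = (\<chi> i j.
     if i = 1 \<and> j = 1 then cos t else
     if i = 1 \<and> j = 2 then - sin t else
     if i = 2 \<and> j = 1 then sin t else
     if i = 2 \<and> j = 2 then cos t else
     if i = 3 \<and> j = 3 then 1 else 0)"

text \<open>O(2): rotations about z together with the rotation by pi about x.\<close>
definition O2 :: "tensor2 set" where
  "O2 = {rotz t | t. True} \<union> {rotz t ** diag3 1 (-1) (-1) | t. True}"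

definition D2 :: "tensor2 set" where
  "D2 = {mat 1, diag3 1 (-1) (-1), diag3 (-1) 1 (-1), diag3 (-1) (-1) 1}"

definition Z2 :: "tensor2 set" where
  "Z2 = {mat 1, diag3 (-1) (-1) 1}"

definition isotropic :: "(nat \<Rightarrow> tensor2) \<Rightarrow> nat \<Rightarrow> bool" where
  "isotropic a n \<longleftrightarrow> conj_SO3 (symgroup a n) SO3"
definition transversely_isotropic :: "(nat \<Rightarrow> tensor2) \<Rightarrow> nat \<Rightarrow> bool" where
  "transversely_isotropic a n \<longleftrightarrow> conj_SO3 (symgroup a n) O2"
definition orthotropic :: "(nat \<Rightarrow> tensor2) \<Rightarrow> nat \<Rightarrow> bool" where
  "orthotropic a n \<longleftrightarrow> conj_SO3 (symgroup a n) D2"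
definition monoclinic :: "(nat \<Rightarrow> tensor2) \<Rightarrow> nat \<Rightarrow> bool" where
  "monoclinic a n \<longleftrightarrow> conj_SO3 (symgroup a n) Z2"

definition dev :: "tensor2 \<Rightarrow> tensor2" where
  "dev a = a - (trace a / 3) *\<^sub>R mat 1"

definition levi :: "3 \<Rightarrow> 3 \<Rightarrow> 3 \<Rightarrow> real" where
  "levi i j k =
    (if (i, j, k) \<in> {(1,2,3), (2,3,1), (3,1,2)} then 1
     else if (i, j, k) \<in> {(1,3,2), (3,2,1), (2,1,3)} then -1 else 0)"

definition tcross :: "tensor2 \<Rightarrow> tensor2 \<Rightarrow> tensor3" where
  "tcross a b = (let f = (\<lambda>i1 i2 i3. \<Sum>j\<in>UNIV. \<Sum>k\<in>UNIV. levi i1 j k * a$j$i2 * b$k$i3) in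
     (\<chi> i1 i2 i3. (f i1 i2 i3 + f i1 i3 i2 + f i2 i1 i3 + f i2 i3 i1 + f i3 i1 i2 + f i3 i2 i1) / 6))"

definition ttr :: "tensor3 \<Rightarrow> real^3" where
  "ttr T = (\<chi> i. \<Sum>j\<in>UNIV. T$i$j$j)"

end

theory Submission
  imports Defs
begin

text \<open>Rotating the whole family conjugates its symmetry group and preserves the criteria:
  \<open>a \<times> b = 0\<close> says that the cubic form \<open>x \<bullet> (a x \<times> b x)\<close> vanishes, and \<open>tr(a \<times> b)\<close> is, up to
  the factor \<open>-1/3\<close>, the axial vector of the commutator \<open>a b - b a\<close>, so it vanishes iff \<open>a\<close> and
  \<open>b\<close> commute. A rotation is a symmetry iff it commutes with every \<open>a\<^sub>k\<close>, and in a suitable frame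
  this is decided as follows.
  \<^item> If every \<open>a\<^sub>k\<close> is spherical, the symmetry group is \<open>SO(3)\<close>.
  \<^item> If \<open>a\<^sub>j\<close> is uniaxial (\<open>a\<^sub>j' \<noteq> 0\<close>, \<open>a\<^sub>j \<times> a\<^sub>j\<^sup>2 = 0\<close>) and \<open>a\<^sub>j \<times> a\<^sub>k = 0\<close> for all \<open>k\<close>, then
    every \<open>a\<^sub>k\<close> is \<open>diag(p, p, q)\<close> about the axis of \<open>a\<^sub>j\<close>, and the group is \<open>O(2)\<close>.
  \<^item> If all \<open>a\<^sub>k\<close> commute they are simultaneously diagonal; the remaining criterion says that the
    diagonals separate the three axes, which leaves \<open>D\<^sub>2\<close>.
  \<^item> A symmetry fixes every \<open>\<omega> = tr(a\<^sub>i \<times> a\<^sub>j)\<close>. If some \<open>\<omega> \<noteq> 0\<close> is an eigenvector of every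
    \<open>a\<^sub>k\<close>, a symmetry is a rotation about \<open>\<omega>\<close> commuting with the non-commuting blocks of
    \<open>a\<^sub>i, a\<^sub>j\<close> orthogonal to \<open>\<omega>\<close>, which leaves \<open>Z\<^sub>2\<close>.
  \<^item> Otherwise a symmetry fixes the non-collinear vectors \<open>\<omega>\<close> and \<open>a\<^sub>k \<omega>\<close>, so it is the identity.

  The five groups are pairwise non-conjugate, being told apart by equality with \<open>SO(3)\<close>, by
  containing an element of order greater than 2, and by their cardinality; so the sufficient
  criteria above are also necessary.\<close>

unbundle cross3_syntax

section \<open>The generalized cross product\<close>

lemma levi_simps [simp]:
  "levi 1 2 3 = 1" "levi 2 3 1 = 1" "levi 3 1 2 = 1"
  "levi 1 3 2 = -1" "levi 3 2 1 = -1" "levi 2 1 3 = -1"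
  "levi 1 1 x = 0" "levi 2 2 x = 0" "levi 3 3 x = 0"
  "levi 1 x 1 = 0" "levi 2 x 2 = 0" "levi 3 x 3 = 0"
  "levi x 1 1 = 0" "levi x 2 2 = 0" "levi x 3 3 = 0"
  by (simp_all add: levi_def)

lemma symmetric_matrix_entry: "transpose a = a \<Longrightarrow> a$i$j = a$j$i"
  by (metis transpose_def vec_lambda_beta)

lemma symmetric_matrix_entries:
  fixes a :: "real^3^3"
  assumes "transpose a = a"
  shows "a$2$1 = a$1$2" "a$3$1 = a$1$3" "a$3$2 = a$2$3"
  using symmetric_matrix_entry[OF assms] by blast+

definition cubic_form :: "real^3^3^3 \<Rightarrow> real^3 \<Rightarrow> real" where
  "cubic_form T x = (\<Sum>i\<in>UNIV. \<Sum>j\<in>UNIV. \<Sum>k\<in>UNIV. T$i$j$k * (x$i * x$j * x$k))"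

lemma cubic_form_tcross: "cubic_form (tcross a b) x = x \<bullet> (a *v x) \<times> (b *v x)"
  unfolding cubic_form_def tcross_def Let_def
  by (simp add: sum_3 cross3_def inner_vec_def matrix_vector_mult_def add_divide_distrib
      algebra_simps)

lemma tcross_swap_12: "tcross a b $i$j$k = tcross a b $j$i$k"
  and tcross_swap_23: "tcross a b $i$j$k = tcross a b $i$k$j"
  by (simp_all only: tcross_def Let_def vec_lambda_beta add_ac)

text \<open>Polarization: a totally symmetric order-3 tensor is determined by its cubic form;
  evaluating the form at the vectors with entries in \<open>{-1, 0, 1}\<close> isolates the coefficients.\<close>

lemma symmetric_tensor3_eq_0:
  fixes T :: "real^3^3^3"
  assumes swap_12: "\<And>i j k. T$i$j$k = T$j$i$k" and swap_23: "\<And>i j k. T$i$j$k = T$i$k$j"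
    and cubic_0: "\<And>x. cubic_form T x = 0"
  shows "T = 0"
proof -
  have sym: "T$1$2$1 = T$1$1$2" "T$1$3$1 = T$1$1$3" "T$1$3$2 = T$1$2$3" "T$2$1$1 = T$1$1$2"
    "T$2$1$2 = T$1$2$2" "T$2$1$3 = T$1$2$3" "T$2$2$1 = T$1$2$2" "T$2$3$1 = T$1$2$3"
    "T$2$3$2 = T$2$2$3" "T$3$1$1 = T$1$1$3" "T$3$1$2 = T$1$2$3" "T$3$1$3 = T$1$3$3"
    "T$3$2$1 = T$1$2$3" "T$3$2$2 = T$2$2$3" "T$3$2$3 = T$2$3$3" "T$3$3$1 = T$1$3$3"
    "T$3$3$2 = T$2$3$3"
    by (metis swap_12 swap_23)+
  have "cubic_form T x = T$1$1$1 * x$1^3 + T$2$2$2 * x$2^3 + T$3$3$3 * x$3^3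
     + 3 * T$1$1$2 * x$1^2 * x$2 + 3 * T$1$1$3 * x$1^2 * x$3 + 3 * T$1$2$2 * x$1 * x$2^2
     + 3 * T$1$3$3 * x$1 * x$3^2 + 3 * T$2$2$3 * x$2^2 * x$3 + 3 * T$2$3$3 * x$2 * x$3^2
     + 6 * T$1$2$3 * x$1 * x$2 * x$3" for x
    unfolding cubic_form_def by (simp add: sum_3 sym power2_eq_square power3_eq_cube algebra_simps)
  note at = cubic_0[of "vector [_, _, _]", unfolded this vector_3]
  have diag: "T$1$1$1 = 0" "T$2$2$2 = 0" "T$3$3$3 = 0"
    using at[of 1 0 0] at[of 0 1 0] at[of 0 0 1] by simp_all
  have "T$1$1$2 = 0" "T$1$2$2 = 0" using at[of 1 1 0] at[of 1 "-1" 0] diag by simp_all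
  moreover have "T$1$1$3 = 0" "T$1$3$3 = 0" using at[of 1 0 1] at[of 1 0 "-1"] diag by simp_all
  moreover have "T$2$2$3 = 0" "T$2$3$3 = 0" using at[of 0 1 1] at[of 0 1 "-1"] diag by simp_all
  moreover have "T$1$2$3 = 0" using at[of 1 1 1] diag calculation by simp
  ultimately show ?thesis by (simp add: vec_eq_iff forall_3 sym diag)
qed

lemma tcross_eq_0_iff: "tcross a b = 0 \<longleftrightarrow> (\<forall>x. x \<bullet> (a *v x) \<times> (b *v x) = 0)"
proof
  show "tcross a b = 0 \<Longrightarrow> \<forall>x. x \<bullet> (a *v x) \<times> (b *v x) = 0"
    by (simp flip: cubic_form_tcross add: cubic_form_def)
  show "\<forall>x. x \<bullet> (a *v x) \<times> (b *v x) = 0 \<Longrightarrow> tcross a b = 0"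
    by (intro symmetric_tensor3_eq_0 tcross_swap_12 tcross_swap_23) (simp add: cubic_form_tcross)
qed

lemma ttr_tcross_components:
  fixes a b :: "real^3^3"
  assumes "transpose a = a" "transpose b = b"
  shows "ttr (tcross a b) $ 1 = ((a ** b)$2$3 - (a ** b)$3$2) / 3"
    "ttr (tcross a b) $ 2 = ((a ** b)$3$1 - (a ** b)$1$3) / 3"
    "ttr (tcross a b) $ 3 = ((a ** b)$1$2 - (a ** b)$2$1) / 3"
  using symmetric_matrix_entries[OF assms(1)] symmetric_matrix_entries[OF assms(2)]
  by (simp_all add: ttr_def tcross_def Let_def sum_3 matrix_matrix_mult_def field_simps)

lemma cross_ttr_tcross:
  fixes a b :: "real^3^3"
  assumes "transpose a = a" "transpose b = b"
  shows "ttr (tcross a b) \<times> x = (- 1 / 3) *\<^sub>R ((a ** b - b ** a) *v x)"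
proof -
  have "b ** a = transpose (a ** b)" by (simp add: matrix_transpose_mul assms)
  then show ?thesis
    by (simp add: vec_eq_iff forall_3 ttr_tcross_components[OF assms] cross3_def
        matrix_vector_mult_def sum_3 transpose_def field_simps)
qed

lemma eq_0_if_cross_eq_0: "(\<And>x. w \<times> x = 0) \<Longrightarrow> w = 0"
proof -
  assume "\<And>x. w \<times> x = 0"
  then have "w \<times> axis 1 1 = 0" "w \<times> axis 2 1 = 0" by auto
  then show "w = 0" by (simp add: cross3_def vec_eq_iff forall_3 axis_def)
qed

lemma ttr_tcross_eq_0_iff:
  fixes a b :: "real^3^3"
  assumes "transpose a = a" "transpose b = b"
  shows "ttr (tcross a b) = 0 \<longleftrightarrow> a ** b = b ** a"
proof
  assume "ttr (tcross a b) = 0"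
  then have "(a ** b - b ** a) *v x = 0" for x using cross_ttr_tcross[OF assms, of x] by simp
  then have "a ** b - b ** a = 0" by (simp add: matrix_eq)
  then show "a ** b = b ** a" by simp
next
  assume "a ** b = b ** a"
  then show "ttr (tcross a b) = 0" using cross_ttr_tcross[OF assms] eq_0_if_cross_eq_0 by simp
qed

section \<open>Rotating a family of tensors\<close>

lemma rotation_matrix_transpose: "rotation_matrix h \<Longrightarrow> rotation_matrix (transpose h)"
  by (simp add: rotation_matrix_def det_transpose)

lemma rotation_matrix_mul:
  fixes g h :: "real^'n^'n"
  shows "rotation_matrix g \<Longrightarrow> rotation_matrix h \<Longrightarrow> rotation_matrix (g ** h)"
  by (simp add: rotation_matrix_def det_mul orthogonal_matrix_mul)

lemma rotation_matrix_id: "rotation_matrix (mat 1 :: real^'n^'n)"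
  by (simp add: rotation_matrix_def orthogonal_matrix_id)

lemma rotation_matrix_inverse:
  assumes "rotation_matrix h"
  shows "transpose h ** h = mat 1" "h ** transpose h = mat 1"
  using assms by (auto simp: rotation_matrix_def orthogonal_matrix_def)

lemma rotation_matrix_inverse_vec:
  assumes "rotation_matrix h"
  shows "h *v (transpose h *v y) = y" "transpose h *v (h *v y) = y"
  using rotation_matrix_inverse[OF assms]
  by (simp_all add: matrix_vector_mul_assoc del: transpose_matrix_vector)

lemma rotation_matrix_inner:
  fixes h :: "real^'n^'n"
  assumes "rotation_matrix h"
  shows "(h *v x) \<bullet> (h *v y) = x \<bullet> y"
proof -
  have "(h *v x) \<bullet> (h *v y) = x \<bullet> (transpose h *v (h *v y))"
    by (metis dot_lmul_matrix transpose_matrix_vector transpose_transpose)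
  then show ?thesis using rotation_matrix_inverse_vec(2)[OF assms] by simp
qed

lemma act2_act2: "act2 g (act2 h a) = act2 (g ** h) a"
  by (simp add: act2_def matrix_transpose_mul matrix_mul_assoc)

lemma act2_transpose_mult: "act2 (transpose (h ** g)) a = act2 (transpose g) (act2 (transpose h) a)"
  by (simp add: act2_act2 matrix_transpose_mul)

lemma act2_mat1 [simp]: "act2 (mat 1) a = a"
  by (simp add: act2_def)

lemma act2_transpose_act2:
  assumes "rotation_matrix h"
  shows "act2 (transpose h) (act2 h a) = a" "act2 h (act2 (transpose h) a) = a"
  using rotation_matrix_inverse[OF assms] by (simp_all add: act2_act2)

lemma act2_inject: "rotation_matrix h \<Longrightarrow> act2 h a = act2 h b \<longleftrightarrow> a = b"
  by (metis act2_transpose_act2(1))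

lemma act2_mult:
  assumes "rotation_matrix h"
  shows "act2 h (a ** b) = act2 h a ** act2 h b"
proof -
  have "act2 h a ** act2 h b = h ** a ** (transpose h ** h) ** b ** transpose h"
    by (simp add: act2_def matrix_mul_assoc)
  then show ?thesis using rotation_matrix_inverse[OF assms] by (simp add: act2_def matrix_mul_assoc)
qed

lemma act2_scalar:
  assumes "rotation_matrix h"
  shows "act2 h (c *\<^sub>R mat 1) = c *\<^sub>R mat 1"
proof -
  have "h ** (c *\<^sub>R mat 1) ** transpose h = c *\<^sub>R (h ** transpose h)"
    by (simp add: matrix_scalar_ac scalar_matrix_assoc)
  then show ?thesis using rotation_matrix_inverse[OF assms] by (simp add: act2_def)
qed

lemma transpose_act2: "transpose (act2 h a) = act2 h (transpose a)"
  by (simp add: act2_def matrix_transpose_mul matrix_mul_assoc)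

lemma act2_mult_vec:
  assumes "rotation_matrix h"
  shows "act2 h a *v (h *v x) = h *v (a *v x)"
  using rotation_matrix_inverse_vec(2)[OF assms]
  by (simp add: act2_def matrix_vector_mul_assoc[symmetric] del: transpose_matrix_vector)

lemma act2_eq_self_iff_commute:
  assumes "rotation_matrix g"
  shows "act2 g a = a \<longleftrightarrow> g ** a = a ** g"
proof
  assume "act2 g a = a"
  moreover have "act2 g a ** g = g ** a ** (transpose g ** g)"
    by (simp add: act2_def matrix_mul_assoc)
  ultimately show "g ** a = a ** g" using rotation_matrix_inverse[OF assms] by simp
next
  assume "g ** a = a ** g"
  then have "act2 g a = a ** (g ** transpose g)" by (simp add: act2_def matrix_mul_assoc)
  then show "act2 g a = a" using rotation_matrix_inverse[OF assms] by simp
qed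

lemma act2_commute_iff:
  "rotation_matrix h \<Longrightarrow> act2 h a ** act2 h b = act2 h b ** act2 h a \<longleftrightarrow> a ** b = b ** a"
  by (simp add: act2_mult[symmetric] act2_inject)

lemma tcross_act2_eq_0_iff:
  assumes h: "rotation_matrix h"
  shows "tcross (act2 h a) (act2 h b) = 0 \<longleftrightarrow> tcross a b = 0"
proof -
  have "(h *v x) \<bullet> (act2 h a *v (h *v x)) \<times> (act2 h b *v (h *v x)) = x \<bullet> (a *v x) \<times> (b *v x)" for x
    using h by (simp add: act2_mult_vec cross_rotation_matrix rotation_matrix_inner)
  moreover have "surj ((*v) h)"
    by (metis rotation_matrix_inverse_vec(1)[OF h] surjI)
  ultimately show ?thesis
    unfolding tcross_eq_0_iff by (metis surjD)
qed

lemma dev_eq_0_iff: "dev a = 0 \<longleftrightarrow> (\<exists>c. a = c *\<^sub>R (mat 1 :: real^3^3))"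
proof -
  have "trace (c *\<^sub>R mat 1 :: real^3^3) = 3 * c" for c
    by (simp add: trace_def sum_3 mat_def)
  then show ?thesis unfolding dev_def by auto
qed

lemma dev_act2_eq_0_iff: "rotation_matrix h \<Longrightarrow> dev (act2 h a) = 0 \<longleftrightarrow> dev a = 0"
  unfolding dev_eq_0_iff by (metis act2_transpose_act2(1) act2_scalar)

lemma act2_in_SO3_iff: "rotation_matrix h \<Longrightarrow> act2 h g \<in> SO3 \<longleftrightarrow> g \<in> SO3"
  unfolding SO3_def act2_def
  by (metis act2_def act2_transpose_act2(1) mem_Collect_eq rotation_matrix_mul rotation_matrix_transpose)

lemma symgroup_act2:
  assumes h: "rotation_matrix h"
  shows "symgroup a n = act2 h ` symgroup (\<lambda>k. act2 (transpose h) (a k)) n"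
proof -
  let ?b = "\<lambda>k. act2 (transpose h) (a k)"
  have conj: "act2 (act2 (transpose h) g) (act2 (transpose h) x) = act2 (transpose h) (act2 g x)"
    for g x
  proof -
    have "act2 (transpose h) g ** transpose h = transpose h ** g ** (h ** transpose h)"
      by (simp add: act2_def matrix_mul_assoc)
    then show ?thesis using rotation_matrix_inverse(2)[OF h] by (simp add: act2_act2)
  qed
  have "g \<in> symgroup a n \<longleftrightarrow> act2 (transpose h) g \<in> symgroup ?b n" for g
    unfolding symgroup_def
    by (simp add: conj act2_inject[OF rotation_matrix_transpose[OF h]]
        act2_in_SO3_iff[OF rotation_matrix_transpose[OF h]])
  then show ?thesis
    using act2_transpose_act2[OF h] by (auto intro: image_eqI[where x = "act2 (transpose h) _"])
qed

lemma conj_SO3I: "rotation_matrix h \<Longrightarrow> G = act2 h ` X \<Longrightarrow> conj_SO3 G X"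
  unfolding conj_SO3_def SO3_def act2_def by auto

lemma conj_SO3_symgroup_act2:
  assumes "rotation_matrix h" "symgroup (\<lambda>k. act2 (transpose h) (a k)) n = X"
  shows "conj_SO3 (symgroup a n) X"
  using conj_SO3I[OF assms(1) symgroup_act2[OF assms(1), of a n]] assms(2) by simp

section \<open>Diagonalization of symmetric tensors\<close>

lemma matrix_eq_iff3:
  fixes A B :: "real^3^3"
  shows "A = B \<longleftrightarrow>
   A$1$1 = B$1$1 \<and> A$1$2 = B$1$2 \<and> A$1$3 = B$1$3 \<and>
   A$2$1 = B$2$1 \<and> A$2$2 = B$2$2 \<and> A$2$3 = B$2$3 \<and>
   A$3$1 = B$3$1 \<and> A$3$2 = B$3$2 \<and> A$3$3 = B$3$3"
  by (simp add: vec_eq_iff forall_3)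

lemma matrix_matrix_mult_entry3: "((A::real^3^3) ** B)$i$j = A$i$1*B$1$j + A$i$2*B$2$j + A$i$3*B$3$j"
  by (simp add: matrix_matrix_mult_def sum_3)

lemma matrix_vector_mult_entry3: "((A::real^3^3) *v x)$i = A$i$1*x$1 + A$i$2*x$2 + A$i$3*x$3"
  by (simp add: matrix_vector_mult_def sum_3)

lemma axis3_entries [simp]:
  "(axis 3 1 :: real^3) $ 1 = 0" "(axis 3 1 :: real^3) $ 2 = 0" "(axis 3 1 :: real^3) $ 3 = 1"
  by (simp_all add: axis_def)

lemma matrix_vector_mult_axis3: "((b :: real^3^3) *v axis 3 1) $ i = b$i$3"
  by (simp add: matrix_vector_mult_entry3)

lemma cross_axis3_eq_0_iff: "w \<times> axis 3 1 = 0 \<longleftrightarrow> w$1 = 0 \<and> w$2 = 0"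
  by (auto simp: cross3_def vec_eq_iff forall_3)

lemma rotz_entries [simp]:
  "rotz t $1$1 = cos t" "rotz t $1$2 = - sin t" "rotz t $1$3 = 0"
  "rotz t $2$1 = sin t" "rotz t $2$2 = cos t" "rotz t $2$3 = 0"
  "rotz t $3$1 = 0" "rotz t $3$2 = 0" "rotz t $3$3 = 1"
  by (simp_all add: rotz_def)

lemma diag3_entries [simp]:
  "diag3 x y z $1$1 = x" "diag3 x y z $1$2 = 0" "diag3 x y z $1$3 = 0"
  "diag3 x y z $2$1 = 0" "diag3 x y z $2$2 = y" "diag3 x y z $2$3 = 0"
  "diag3 x y z $3$1 = 0" "diag3 x y z $3$2 = 0" "diag3 x y z $3$3 = z"
  by (simp_all add: diag3_def)

lemma mat1_entries3 [simp]:
  "(mat 1 :: real^3^3) $1$1 = 1" "(mat 1 :: real^3^3) $1$2 = 0" "(mat 1 :: real^3^3) $1$3 = 0"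
  "(mat 1 :: real^3^3) $2$1 = 0" "(mat 1 :: real^3^3) $2$2 = 1" "(mat 1 :: real^3^3) $2$3 = 0"
  "(mat 1 :: real^3^3) $3$1 = 0" "(mat 1 :: real^3^3) $3$2 = 0" "(mat 1 :: real^3^3) $3$3 = 1"
  by (simp_all add: mat_def)

lemma mat1_eq_diag3: "(mat 1 :: real^3^3) = diag3 1 1 1"
  unfolding matrix_eq_iff3 by simp

lemma diag3_eq_iff: "diag3 x y z = diag3 x' y' z' \<longleftrightarrow> x = x' \<and> y = y' \<and> z = z'"
  unfolding matrix_eq_iff3 by simp

lemma diag3_mult: "diag3 x y z ** diag3 x' y' z' = diag3 (x * x') (y * y') (z * z')"
  unfolding matrix_eq_iff3 by (simp add: matrix_matrix_mult_entry3)

lemma rotation_matrix_by_entries: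
  fixes g :: "real^3^3"
  shows "transpose g ** g = mat 1 \<Longrightarrow> det g = 1 \<Longrightarrow> rotation_matrix g"
  by (simp add: rotation_matrix_def orthogonal_matrix)

lemma rotation_matrix_rotz: "rotation_matrix (rotz t)"
  by (rule rotation_matrix_by_entries)
    (simp_all add: matrix_eq_iff3 matrix_matrix_mult_entry3 transpose_def det_3
      power2_eq_square[symmetric])

lemma rotation_matrix_diag3:
  "x * x = 1 \<Longrightarrow> y * y = 1 \<Longrightarrow> z * z = 1 \<Longrightarrow> x * y * z = 1 \<Longrightarrow> rotation_matrix (diag3 x y z)"
  by (rule rotation_matrix_by_entries)
    (simp_all add: matrix_eq_iff3 matrix_matrix_mult_entry3 transpose_def det_3)

lemma rotation_matrix_column_entries:
  fixes g :: "real^3^3"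
  assumes "rotation_matrix g"
  shows "g$1$1*g$1$1 + g$2$1*g$2$1 + g$3$1*g$3$1 = 1"
    "g$1$2*g$1$2 + g$2$2*g$2$2 + g$3$2*g$3$2 = 1"
    "g$1$3*g$1$3 + g$2$3*g$2$3 + g$3$3*g$3$3 = 1"
    "g$1$1*g$1$2 + g$2$1*g$2$2 + g$3$1*g$3$2 = 0"
    "g$1$1*g$1$3 + g$2$1*g$2$3 + g$3$1*g$3$3 = 0"
    "g$1$2*g$1$3 + g$2$2*g$2$3 + g$3$2*g$3$3 = 0"
proof -
  have "(transpose g ** g)$i$j = (mat 1 :: real^3^3)$i$j" for i j
    using rotation_matrix_inverse(1)[OF assms] by simp
  note entry = this[unfolded matrix_matrix_mult_entry3, simplified transpose_def vec_lambda_beta]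
  show "g$1$1*g$1$1 + g$2$1*g$2$1 + g$3$1*g$3$1 = 1"
    "g$1$2*g$1$2 + g$2$2*g$2$2 + g$3$2*g$3$2 = 1"
    "g$1$3*g$1$3 + g$2$3*g$2$3 + g$3$3*g$3$3 = 1"
    "g$1$1*g$1$2 + g$2$1*g$2$2 + g$3$1*g$3$2 = 0"
    "g$1$1*g$1$3 + g$2$1*g$2$3 + g$3$1*g$3$3 = 0"
    "g$1$2*g$1$3 + g$2$2*g$2$3 + g$3$2*g$3$3 = 0"
    using entry[of 1 1] entry[of 2 2] entry[of 3 3] entry[of 1 2] entry[of 1 3] entry[of 2 3]
    by simp_all
qed

lemma symmetric_matrix_inner:
  fixes a :: "real^'n^'n"
  assumes "transpose a = a"
  shows "(a *v x) \<bullet> y = x \<bullet> (a *v y)"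
proof -
  have "a *v x = x v* a" using transpose_matrix_vector[of a x] assms by simp
  then show ?thesis by (simp add: dot_lmul_matrix)
qed

lemma quadratic_nonpos_linear_coeff_0:
  fixes c d :: real
  assumes "\<And>t. 2 * t * c + t^2 * d \<le> 0"
  shows "c = 0"
proof -
  define s where "s = 1 / (\<bar>d\<bar> + 1)"
  have s: "s > 0" "s * \<bar>d\<bar> < 1" unfolding s_def by (simp_all add: add_pos_nonneg field_simps)
  have "s * c^2 * (2 + s * d) \<le> 0"
    using assms[of "s * c"] by (simp add: power2_eq_square algebra_simps)
  moreover have "\<bar>s * d\<bar> < 1" using s by (simp add: abs_mult)
  then have "2 + s * d > 0" by (simp add: abs_less_iff)
  ultimately have "c^2 \<le> 0" using s by (simp add: mult_le_0_iff)
  then show ?thesis by simp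
qed

text \<open>A maximiser \<open>u\<close> of the Rayleigh quotient on the unit sphere is an eigenvector: the
  quadratic form is bounded by \<open>\<lambda> |x|\<^sup>2\<close>, and expanding this bound at \<open>u + t v\<close> forces
  \<open>v \<bullet> (a u - \<lambda> u) = 0\<close> for every \<open>v\<close>.\<close>

lemma symmetric_matrix_unit_eigenvector:
  fixes a :: "real^'n^'n"
  assumes sym: "transpose a = a"
  obtains u l where "norm u = 1" "a *v u = l *\<^sub>R u"
proof -
  let ?f = "\<lambda>x. x \<bullet> (a *v x)"
  have "continuous_on (sphere 0 1) ?f"
    by (intro continuous_on_inner continuous_on_id matrix_vector_mult_linear_continuous_on)
  then obtain u where u: "u \<in> sphere 0 1" and u_max: "\<forall>y\<in>sphere 0 1. ?f y \<le> ?f u"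
    using continuous_attains_sup[of "sphere 0 1" ?f] by auto
  define l where "l = ?f u"
  have uu: "u \<bullet> u = 1" using u by (simp add: dot_square_norm)
  have homogeneous: "?f (c *\<^sub>R x) = c^2 * ?f x" for c x
    by (simp add: matrix_vector_mult_scaleR power2_eq_square)
  have bound: "?f x \<le> l * (x \<bullet> x)" for x
  proof (cases "x = 0")
    case False
    have "(1 / norm x) *\<^sub>R x \<in> sphere 0 1" using False by simp
    then have "?f ((1 / norm x) *\<^sub>R x) \<le> l" using u_max l_def by blast
    then have "(1 / norm x)^2 * ?f x \<le> l" by (simp only: homogeneous)
    then show ?thesis using False by (simp add: dot_square_norm field_simps)
  qed simp
  have "v \<bullet> (a *v u) = l * (v \<bullet> u)" for v
  proof -
    have expand: "?f (u + t *\<^sub>R v) = l + 2 * t * (v \<bullet> (a *v u)) + t^2 * ?f v" for t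
      using symmetric_matrix_inner[OF sym, of v u]
      by (simp add: l_def inner_add_left inner_add_right matrix_vector_right_distrib
          matrix_vector_mult_scaleR power2_eq_square inner_commute algebra_simps)
    have norm_expand: "(u + t *\<^sub>R v) \<bullet> (u + t *\<^sub>R v) = 1 + 2 * t * (v \<bullet> u) + t^2 * (v \<bullet> v)"
      for t
      using uu by (simp add: inner_add_left inner_add_right power2_eq_square inner_commute
          algebra_simps)
    have "2 * t * (v \<bullet> (a *v u) - l * (v \<bullet> u)) + t^2 * (?f v - l * (v \<bullet> v)) \<le> 0" for t
      using bound[of "u + t *\<^sub>R v"] unfolding expand norm_expand by (simp add: algebra_simps)
    then show ?thesis using quadratic_nonpos_linear_coeff_0 by fastforce
  qed
  then have "(a *v u - l *\<^sub>R u) \<bullet> (a *v u - l *\<^sub>R u) = 0"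
    by (simp add: inner_diff_left inner_diff_right)
  then show ?thesis using that u by simp
qed

lemma diag3_commute_entry:
  assumes "diag3 x y z ** b = b ** diag3 x y z" "diag3 x y z $i$i \<noteq> diag3 x y z $j$j"
  shows "b$i$j = 0"
proof -
  have "(diag3 x y z ** b)$i$j = (b ** diag3 x y z)$i$j" using assms(1) by simp
  then show ?thesis
    using assms(2) exhaust_3[of i] exhaust_3[of j] by (auto simp: matrix_matrix_mult_entry3)
qed

lemma rotz_commute_diag3: "rotz t ** diag3 p p r = diag3 p p r ** rotz t"
  unfolding matrix_eq_iff3 by (simp add: matrix_matrix_mult_entry3)

lemma scaleR_mat1_eq_diag3: "c *\<^sub>R mat 1 = diag3 c c c"
  by (simp add: matrix_eq_iff3)

lemma dev_diag3_eq_0_iff: "dev (diag3 x y z) = 0 \<longleftrightarrow> x = y \<and> y = z"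
  unfolding dev_eq_0_iff scaleR_mat1_eq_diag3 diag3_eq_iff by auto

lemma symmetric_matrix_eq_diag3:
  fixes b :: "real^3^3"
  assumes "transpose b = b" "b$1$2 = 0" "b$1$3 = 0" "b$2$3 = 0"
  shows "b = diag3 (b$1$1) (b$2$2) (b$3$3)"
  using symmetric_matrix_entries[OF assms(1)] assms(2-) by (simp add: matrix_eq_iff3)

lemma act2_rotz_block_entries:
  fixes b :: "real^3^3"
  assumes "transpose b = b" "b$1$3 = 0" "b$2$3 = 0"
  shows "(act2 (transpose (rotz t)) b)$1$3 = 0" "(act2 (transpose (rotz t)) b)$2$3 = 0"
    "(act2 (transpose (rotz t)) b)$1$2
      = cos t * sin t * (b$2$2 - b$1$1) + b$1$2 * ((cos t)^2 - (sin t)^2)"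
  using assms symmetric_matrix_entries[OF assms(1)]
  by (simp_all add: act2_def matrix_matrix_mult_entry3 transpose_def power2_eq_square algebra_simps)

lemma exists_angle_rotz_offdiag_0:
  fixes p q r :: real
  shows "\<exists>t. cos t * sin t * (q - p) + r * ((cos t)^2 - (sin t)^2) = 0"
proof (cases "p = q")
  case True
  then show ?thesis by (intro exI[of _ "pi / 4"]) (simp add: cos_45 sin_45)
next
  case False
  define s where "s = arctan (2 * r / (p - q))"
  have "sin s = tan s * cos s" using cos_arctan_not_zero by (simp add: s_def tan_def)
  then have sin_s: "sin s = 2 * r / (p - q) * cos s" by (simp add: s_def tan_arctan)
  have half: "cos (s / 2) * sin (s / 2) = sin s / 2" "(cos (s / 2))^2 - (sin (s / 2))^2 = cos s"
    using sin_double[of "s / 2"] cos_double[of "s / 2"] by simp_all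
  have "cos (s / 2) * sin (s / 2) * (q - p) + r * ((cos (s / 2))^2 - (sin (s / 2))^2)
      = sin s / 2 * (q - p) + r * cos s"
    by (simp only: half)
  also have "\<dots> = 0" using False by (simp add: sin_s field_simps)
  finally show ?thesis by blast
qed

lemma rotz_diagonalize_block:
  fixes b :: "real^3^3"
  assumes "transpose b = b" "b$1$3 = 0" "b$2$3 = 0"
  obtains t x y z where "act2 (transpose (rotz t)) b = diag3 x y z"
proof -
  obtain t where t: "cos t * sin t * (b$2$2 - b$1$1) + b$1$2 * ((cos t)^2 - (sin t)^2) = 0"
    using exists_angle_rotz_offdiag_0 by blast
  let ?c = "act2 (transpose (rotz t)) b"
  have "transpose ?c = ?c" using assms(1) by (simp add: transpose_act2)
  moreover have "?c$1$2 = 0" "?c$1$3 = 0" "?c$2$3 = 0"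
    using t act2_rotz_block_entries[OF assms] by simp_all
  ultimately have "?c = diag3 (?c$1$1) (?c$2$2) (?c$3$3)" by (rule symmetric_matrix_eq_diag3)
  then show ?thesis by (rule that)
qed

text \<open>Rotate one matrix whose upper block is not scalar to diagonal form: its upper diagonal
  entries are then distinct, so everything commuting with it is diagonal as well.\<close>

lemma rotz_diagonalize_commuting_blocks:
  fixes B :: "(real^3^3) set"
  assumes block: "\<And>b. b \<in> B \<Longrightarrow> transpose b = b \<and> b$1$3 = 0 \<and> b$2$3 = 0"
    and comm: "\<And>b c. b \<in> B \<Longrightarrow> c \<in> B \<Longrightarrow> b ** c = c ** b"
  obtains t where "\<And>b. b \<in> B \<Longrightarrow> \<exists>x y z. act2 (transpose (rotz t)) b = diag3 x y z"
proof (cases "\<forall>b\<in>B. b$1$2 = 0")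
  case True
  have "rotz 0 = mat 1" unfolding matrix_eq_iff3 by simp
  then have "act2 (transpose (rotz 0)) b = diag3 (b$1$1) (b$2$2) (b$3$3)" if "b \<in> B" for b
    using True block[OF that] that symmetric_matrix_eq_diag3[of b] by (simp add: transpose_mat)
  then show ?thesis using that by blast
next
  case False
  then obtain b0 where b0: "b0 \<in> B" "b0$1$2 \<noteq> 0" by blast
  have "transpose b0 = b0" "b0$1$3 = 0" "b0$2$3 = 0" using block[OF b0(1)] by auto
  then obtain t p q r where c0: "act2 (transpose (rotz t)) b0 = diag3 p q r"
    by (rule rotz_diagonalize_block)
  let ?R = "transpose (rotz t)"
  have R: "rotation_matrix ?R" using rotation_matrix_transpose rotation_matrix_rotz by blast
  have "p \<noteq> q"
  proof
    assume "p = q"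
    then have "b0 = act2 (rotz t) (diag3 p p r)"
      using c0 act2_transpose_act2(2)[OF rotation_matrix_rotz, of t b0] by simp
    also have "\<dots> = diag3 p p r"
      using act2_eq_self_iff_commute[OF rotation_matrix_rotz] rotz_commute_diag3 by blast
    finally show False using b0(2) by simp
  qed
  have "\<exists>x y z. act2 ?R b = diag3 x y z" if "b \<in> B" for b
  proof -
    have "diag3 p q r ** act2 ?R b = act2 ?R b ** diag3 p q r"
      using comm[OF b0(1) that] act2_commute_iff[OF R, of b0 b] c0 by simp
    then have "act2 ?R b $1$2 = 0"
      using \<open>p \<noteq> q\<close> diag3_commute_entry[of p q r _ 1 2] by simp
    moreover have "transpose (act2 ?R b) = act2 ?R b" "act2 ?R b $1$3 = 0" "act2 ?R b $2$3 = 0"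
      using block[OF that] act2_rotz_block_entries[of b t] by (simp_all add: transpose_act2)
    ultimately show ?thesis using symmetric_matrix_eq_diag3 by blast
  qed
  then show ?thesis using that by blast
qed

lemma symmetric_matrix_diagonalize:
  fixes a :: "real^3^3"
  assumes sym: "transpose a = a"
  obtains h d1 d2 d3 where "rotation_matrix h" "act2 (transpose h) a = diag3 d1 d2 d3"
proof -
  obtain u l where u: "norm u = 1" "a *v u = l *\<^sub>R u"
    using symmetric_matrix_unit_eigenvector[OF sym] by blast
  obtain h where h: "rotation_matrix h" "h *v axis 3 1 = u"
    using rotation_matrix_exists_basis[of u 3] u(1) by auto
  define b where "b = act2 (transpose h) a"
  have "b *v axis 3 1 = transpose h *v (a *v (h *v axis 3 1))"
    by (simp add: b_def act2_def matrix_vector_mul_assoc matrix_mul_assoc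
        del: transpose_matrix_vector)
  also have "\<dots> = l *\<^sub>R (transpose h *v u)"
    by (simp add: h(2) u(2) matrix_vector_mult_scaleR del: transpose_matrix_vector)
  also have "\<dots> = l *\<^sub>R axis 3 1"
    using rotation_matrix_inverse_vec(2)[OF h(1), of "axis 3 1"] h(2) by simp
  finally have "(b *v axis 3 1)$1 = 0" "(b *v axis 3 1)$2 = 0" by simp_all
  then have "b$1$3 = 0" "b$2$3 = 0" by (simp_all add: matrix_vector_mult_axis3)
  moreover have "transpose b = b" by (simp add: b_def transpose_act2 sym)
  ultimately obtain t x y z where "act2 (transpose (rotz t)) b = diag3 x y z"
    using rotz_diagonalize_block by blast
  then show ?thesis
    using that[OF rotation_matrix_mul[OF h(1) rotation_matrix_rotz]]
    by (simp add: act2_transpose_mult b_def)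
qed

definition cycle3 :: "real^3^3" where
  "cycle3 = (\<chi> i j. if i = 1 \<and> j = 3 \<or> i = 2 \<and> j = 1 \<or> i = 3 \<and> j = 2 then 1 else 0)"

lemma cycle3_entries [simp]:
  "cycle3$1$1 = 0" "cycle3$1$2 = 0" "cycle3$1$3 = 1" "cycle3$2$1 = 1" "cycle3$2$2 = 0"
  "cycle3$2$3 = 0" "cycle3$3$1 = 0" "cycle3$3$2 = 1" "cycle3$3$3 = 0"
  by (simp_all add: cycle3_def)

lemma rotation_matrix_cycle3: "rotation_matrix cycle3"
  by (rule rotation_matrix_by_entries)
    (simp_all add: matrix_eq_iff3 matrix_matrix_mult_entry3 transpose_def det_3)

lemma act2_cycle3_diag3: "act2 (transpose cycle3) (diag3 x y z) = diag3 y z x"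
  unfolding matrix_eq_iff3 by (simp add: act2_def matrix_matrix_mult_entry3 transpose_def)

text \<open>A non-spherical symmetric tensor has a simple eigenvalue; a cyclic permutation of the
  axes moves it to the last place.\<close>

lemma symmetric_matrix_diagonalize_simple_last:
  fixes a :: "real^3^3"
  assumes sym: "transpose a = a" and dev: "dev a \<noteq> 0"
  obtains h x y z where "rotation_matrix h" "act2 (transpose h) a = diag3 x y z" "z \<noteq> x" "z \<noteq> y"
proof -
  obtain h d1 d2 d3 where h: "rotation_matrix h" and hd: "act2 (transpose h) a = diag3 d1 d2 d3"
    using symmetric_matrix_diagonalize[OF sym] by blast
  have "\<not> (d1 = d2 \<and> d2 = d3)"
    using dev dev_act2_eq_0_iff[OF rotation_matrix_transpose[OF h], of a]
    by (simp add: hd dev_diag3_eq_0_iff)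
  have cyc: "rotation_matrix cycle3" "rotation_matrix (cycle3 ** cycle3)"
    using rotation_matrix_cycle3 rotation_matrix_mul by blast+
  have cyc1: "act2 (transpose (h ** cycle3)) a = diag3 d2 d3 d1"
    and cyc2: "act2 (transpose (h ** (cycle3 ** cycle3))) a = diag3 d3 d1 d2"
    by (simp_all add: act2_transpose_mult hd act2_cycle3_diag3)
  consider "d3 \<noteq> d1 \<and> d3 \<noteq> d2" | "d1 \<noteq> d2 \<and> d1 \<noteq> d3" | "d2 \<noteq> d1 \<and> d2 \<noteq> d3"
    using \<open>\<not> (d1 = d2 \<and> d2 = d3)\<close> by blast
  then show ?thesis
  proof cases
    case 1
    then show ?thesis using that[OF h hd] by blast
  next
    case 2
    then show ?thesis using that[OF rotation_matrix_mul[OF h cyc(1)] cyc1] by blast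
  next
    case 3
    then show ?thesis using that[OF rotation_matrix_mul[OF h cyc(2)] cyc2] by blast
  qed
qed

lemma commuting_symmetric_simultaneous_diagonalization:
  fixes A :: "(real^3^3) set"
  assumes sym: "\<And>a. a \<in> A \<Longrightarrow> transpose a = a"
    and comm: "\<And>a b. a \<in> A \<Longrightarrow> b \<in> A \<Longrightarrow> a ** b = b ** a"
  obtains h where "rotation_matrix h" "\<And>a. a \<in> A \<Longrightarrow> \<exists>x y z. act2 (transpose h) a = diag3 x y z"
proof (cases "\<forall>a\<in>A. dev a = 0")
  case True
  have "\<exists>x y z. act2 (transpose (mat 1)) a = diag3 x y z" if "a \<in> A" for a
  proof -
    obtain c where "a = c *\<^sub>R mat 1" using True \<open>a \<in> A\<close> dev_eq_0_iff by blast
    then have "act2 (transpose (mat 1)) a = diag3 c c c"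
      by (simp add: transpose_mat scaleR_mat1_eq_diag3)
    then show ?thesis by blast
  qed
  then show ?thesis using that[OF rotation_matrix_id] by blast
next
  case False
  then obtain a0 where a0: "a0 \<in> A" "dev a0 \<noteq> 0" by blast
  obtain h x y z where h: "rotation_matrix h" and hd: "act2 (transpose h) a0 = diag3 x y z"
    and "z \<noteq> x" "z \<noteq> y"
    by (rule symmetric_matrix_diagonalize_simple_last[OF sym[OF a0(1)] a0(2)])
  have hT: "rotation_matrix (transpose h)" using rotation_matrix_transpose[OF h] .
  define B where "B = act2 (transpose h) ` A"
  have block: "transpose b = b \<and> b$1$3 = 0 \<and> b$2$3 = 0" if "b \<in> B" for b
  proof -
    obtain a where a: "a \<in> A" and b: "b = act2 (transpose h) a" using \<open>b \<in> B\<close> B_def by blast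
    have "diag3 x y z ** b = b ** diag3 x y z"
      using comm[OF a0(1) a] act2_commute_iff[OF hT, of a0 a] hd b by simp
    then have "b$1$3 = 0" "b$2$3 = 0"
      using diag3_commute_entry[of x y z b 1 3] diag3_commute_entry[of x y z b 2 3]
        \<open>z \<noteq> x\<close> \<open>z \<noteq> y\<close> by simp_all
    moreover have "transpose b = b" using b sym[OF a] by (simp add: transpose_act2)
    ultimately show ?thesis by blast
  qed
  have commute: "b ** c = c ** b" if "b \<in> B" "c \<in> B" for b c
    using that comm act2_commute_iff[OF hT] unfolding B_def by auto
  obtain t where t: "\<And>b. b \<in> B \<Longrightarrow> \<exists>x y z. act2 (transpose (rotz t)) b = diag3 x y z"
    using rotz_diagonalize_commuting_blocks[OF block commute] by blast
  have "\<exists>x y z. act2 (transpose (h ** rotz t)) a = diag3 x y z" if "a \<in> A" for a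
    using t[of "act2 (transpose h) a"] that unfolding B_def by (simp add: act2_transpose_mult)
  then show ?thesis using that[OF rotation_matrix_mul[OF h rotation_matrix_rotz]] by blast
qed

section \<open>Symmetry groups of normal forms\<close>

lemma O2_memberD:
  assumes "g \<in> O2"
  shows "rotation_matrix g \<and> g$1$3 = 0 \<and> g$2$3 = 0 \<and> g$3$1 = 0 \<and> g$3$2 = 0"
proof -
  have flip: "rotation_matrix (diag3 1 (-1) (-1))" by (rule rotation_matrix_diag3) simp_all
  from assms obtain t where "g = rotz t \<or> g = rotz t ** diag3 1 (-1) (-1)"
    unfolding O2_def by blast
  then show ?thesis
    using rotation_matrix_rotz rotation_matrix_mul[OF rotation_matrix_rotz flip]
    by (auto simp: matrix_matrix_mult_entry3)
qed

text \<open>The upper \<open>2 \<times> 2\<close> block of \<open>g\<close> is orthogonal with determinant \<open>g$3$3 = \<plusminus>1\<close>.\<close>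

lemma O2_memberI:
  fixes g :: "real^3^3"
  assumes g: "rotation_matrix g" and z: "g$1$3 = 0" "g$2$3 = 0" "g$3$1 = 0" "g$3$2 = 0"
  shows "g \<in> O2"
proof -
  note col = rotation_matrix_column_entries[OF g, unfolded z]
  have xy: "(g$1$1)^2 + (g$2$1)^2 = 1" using col(1) by (simp add: power2_eq_square)
  have det: "g$3$3 * (g$1$1 * g$2$2 - g$1$2 * g$2$1) = 1"
    using g unfolding rotation_matrix_def det_3 z by (simp add: algebra_simps)
  obtain t where t: "g$1$1 = cos t" "g$2$1 = sin t" using sincos_total_2pi[OF xy] by metis
  have "g$3$3 * g$3$3 = 1" using col(3) by simp
  then consider "g$3$3 = 1" | "g$3$3 = -1" by (metis square_eq_1_iff power2_eq_square)
  then show ?thesis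
  proof cases
    case 1
    then have "(g$1$2 + g$2$1)^2 + (g$2$2 - g$1$1)^2 = 0"
      using xy col det by (simp add: power2_eq_square algebra_simps)
    then have "g = rotz t"
      unfolding matrix_eq_iff3 using t z 1 by (simp add: sum_power2_eq_zero_iff)
    then show ?thesis unfolding O2_def by blast
  next
    case 2
    then have "(g$1$2 - g$2$1)^2 + (g$2$2 + g$1$1)^2 = 0"
      using xy col det by (simp add: power2_eq_square algebra_simps)
    then have "g = rotz t ** diag3 1 (-1) (-1)"
      unfolding matrix_eq_iff3 using t z 2 by (simp add: sum_power2_eq_zero_iff matrix_matrix_mult_entry3)
    then show ?thesis unfolding O2_def by blast
  qed
qed

lemma symgroup_iff: "g \<in> symgroup a n \<longleftrightarrow> rotation_matrix g \<and> (\<forall>k\<in>{1..n}. g ** a k = a k ** g)"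
  using act2_eq_self_iff_commute unfolding symgroup_def SO3_def by auto

lemma symgroup_eq_SO3:
  assumes "\<forall>k\<in>{1..n}. dev (a k) = 0"
  shows "symgroup a n = SO3"
  using assms act2_scalar unfolding symgroup_def SO3_def dev_eq_0_iff by auto

lemma diag3_commute_block:
  fixes b :: "real^3^3"
  assumes "b$1$3 = 0" "b$2$3 = 0" "b$3$1 = 0" "b$3$2 = 0"
  shows "diag3 p p q ** b = b ** diag3 p p q"
  using assms by (simp add: matrix_eq_iff3 matrix_matrix_mult_entry3)

lemma symgroup_eq_O2:
  assumes uniaxial: "\<forall>k\<in>{1..n}. \<exists>p q. b k = diag3 p p q"
    and j: "j \<in> {1..n}" "b j = diag3 p0 p0 q0" "p0 \<noteq> q0"
  shows "symgroup b n = O2"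
proof (intro equalityI subsetI)
  fix g assume "g \<in> symgroup b n"
  then have g: "rotation_matrix g" and "g ** b j = b j ** g"
    using j(1) unfolding symgroup_iff by auto
  then have "g$1$3 = 0" "g$2$3 = 0" "g$3$1 = 0" "g$3$2 = 0"
    using diag3_commute_entry[of p0 p0 q0 g] j(2,3) by auto
  then show "g \<in> O2" using O2_memberI g by blast
next
  fix g assume "g \<in> O2"
  note g = O2_memberD[OF this]
  have "g ** b k = b k ** g" if k: "k \<in> {1..n}" for k
  proof -
    obtain p q where "b k = diag3 p p q" using uniaxial k by blast
    then show ?thesis using g diag3_commute_block[of g p q] by simp
  qed
  then show "g \<in> symgroup b n" using g unfolding symgroup_iff by blast
qed

lemma rotation_matrix_diag3_iff_D2: "rotation_matrix (diag3 x y z) \<longleftrightarrow> diag3 x y z \<in> D2"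
proof
  assume rot: "rotation_matrix (diag3 x y z)"
  have "x\<^sup>2 = 1" "y\<^sup>2 = 1" "z\<^sup>2 = 1"
    using rotation_matrix_column_entries(1-3)[OF rot] by (simp_all add: power2_eq_square)
  then have "x = 1 \<or> x = -1" "y = 1 \<or> y = -1" "z = 1 \<or> z = -1"
    by (auto simp: power2_eq_1_iff)
  moreover have "x * y * z = 1" using rot by (simp add: rotation_matrix_def det_3)
  ultimately show "diag3 x y z \<in> D2" unfolding D2_def mat1_eq_diag3 by auto
next
  assume "diag3 x y z \<in> D2"
  then show "rotation_matrix (diag3 x y z)"
    unfolding D2_def mat1_eq_diag3 by (auto intro!: rotation_matrix_diag3 simp: diag3_eq_iff)
qed

lemma symgroup_eq_D2:
  assumes diagonal: "\<forall>k\<in>{1..n}. \<exists>x y z. b k = diag3 x y z"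
    and separating: "\<And>i j. i \<noteq> j \<Longrightarrow> \<exists>k\<in>{1..n}. b k $i$i \<noteq> b k $j$j"
  shows "symgroup b n = D2"
proof (intro equalityI subsetI)
  fix g assume "g \<in> symgroup b n"
  then have rot: "rotation_matrix g" and comm: "\<And>k. k \<in> {1..n} \<Longrightarrow> g ** b k = b k ** g"
    unfolding symgroup_iff by auto
  have "g$i$j = 0" if ij: "i \<noteq> j" for i j
  proof -
    obtain k where k: "k \<in> {1..n}" "b k $i$i \<noteq> b k $j$j" using separating[OF ij] by blast
    moreover obtain x y z where "b k = diag3 x y z" using diagonal k(1) by blast
    ultimately show ?thesis
      using diag3_commute_entry[of x y z g i j] comm[OF k(1)] by simp
  qed
  then have "g = diag3 (g$1$1) (g$2$2) (g$3$3)" unfolding matrix_eq_iff3 by simp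
  then show "g \<in> D2" using rot rotation_matrix_diag3_iff_D2 by metis
next
  fix g assume "g \<in> D2"
  then obtain x y z where "g = diag3 x y z" "rotation_matrix g"
    using rotation_matrix_diag3_iff_D2 unfolding D2_def mat1_eq_diag3 by blast
  then show "g \<in> symgroup b n"
    using diagonal unfolding symgroup_iff by (auto simp: diag3_mult mult.commute)
qed

lemma commute_matrix_vector_mult: "g ** a = a ** g \<Longrightarrow> g *v (a *v x) = a *v (g *v x)"
  by (metis matrix_vector_mul_assoc)

text \<open>A rotation commuting with \<open>a\<close> and \<open>b\<close> commutes with \<open>[a, b]\<close>, so it fixes the axial
  vector \<open>tr(a \<times> b)\<close> of that skew matrix.\<close>

lemma rotation_commute_fixes_ttr_tcross:
  fixes g a b :: "real^3^3"
  assumes g: "rotation_matrix g" and sym: "transpose a = a" "transpose b = b"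
    and ga: "g ** a = a ** g" and gb: "g ** b = b ** g"
  shows "g *v ttr (tcross a b) = ttr (tcross a b)"
proof -
  define w where "w = ttr (tcross a b)"
  have commutator: "g *v ((a ** b - b ** a) *v y) = (a ** b - b ** a) *v (g *v y)" for y
    by (simp add: matrix_vector_mult_diff_rdistrib matrix_vector_mult_diff_distrib
        matrix_vector_mul_assoc[symmetric]
        commute_matrix_vector_mult[OF ga] commute_matrix_vector_mult[OF gb]
        del: transpose_matrix_vector)
  have "(g *v w) \<times> x = w \<times> x" for x
  proof -
    have "(g *v w) \<times> x = g *v (w \<times> (transpose g *v x))"
      using cross_rotation_matrix[OF g, of w "transpose g *v x"] rotation_matrix_inverse_vec(1)[OF g]
      by (simp del: transpose_matrix_vector)
    also have "\<dots> = g *v ((- 1 / 3) *\<^sub>R ((a ** b - b ** a) *v (transpose g *v x)))"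
      by (simp only: w_def cross_ttr_tcross[OF sym])
    also have "\<dots> = (- 1 / 3) *\<^sub>R ((a ** b - b ** a) *v x)"
      by (simp only: matrix_vector_mult_scaleR commutator rotation_matrix_inverse_vec(1)[OF g])
    also have "\<dots> = w \<times> x" by (simp add: w_def cross_ttr_tcross[OF sym])
    finally show ?thesis .
  qed
  then have "(g *v w - w) \<times> x = 0" for x by (simp add: Cross3.left_diff_distrib)
  then have "g *v w - w = 0" by (rule eq_0_if_cross_eq_0)
  then show ?thesis by (simp add: w_def)
qed

lemma rotation_fixing_noncollinear_eq_id:
  fixes g :: "real^3^3"
  assumes g: "rotation_matrix g" and gp: "g *v p = p" and gq: "g *v q = q" and pq: "p \<times> q \<noteq> 0"
  shows "g = mat 1"
proof -
  define r where "r = p \<times> q"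
  have gr: "g *v r = r" unfolding r_def using cross_rotation_matrix[OF g, of p q] gp gq by simp
  define V :: "real^3^3" where "V = vector [p, q, r]"
  have "det V = p \<bullet> (q \<times> r)" unfolding V_def by (simp add: dot_cross_det)
  also have "\<dots> = (p \<times> q) \<bullet> r" by (metis cross_triple inner_commute)
  finally have "det V = r \<bullet> r" by (simp add: r_def)
  then have "det (transpose V) \<noteq> 0" using pq by (simp add: det_transpose r_def)
  then obtain B where B: "transpose V ** B = mat 1"
    using invertible_det_nz invertible_right_inverse by blast
  have "((g - mat 1) ** transpose V)$x$y = ((g - mat 1) *v (V$y))$x" for x y
    by (simp add: matrix_matrix_mult_def matrix_vector_mult_def transpose_def mult.commute)
  moreover have "(g - mat 1) *v (V$y) = 0" for y
    using exhaust_3[of y] gp gq gr by (auto simp: V_def matrix_vector_mult_diff_rdistrib)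
  ultimately have "(g - mat 1) ** transpose V = 0" by (simp add: vec_eq_iff)
  then have "(g - mat 1) ** (transpose V ** B) = 0" by (metis matrix_mul_assoc times0_left)
  then show ?thesis using B by simp
qed

lemma symgroup_eq_trivial:
  assumes sym: "\<forall>k\<in>{1..n}. transpose (a k) = a k"
    and ijk: "i \<in> {1..n}" "j \<in> {1..n}" "k \<in> {1..n}"
    and moved: "(a k *v ttr (tcross (a i) (a j))) \<times> ttr (tcross (a i) (a j)) \<noteq> 0"
  shows "symgroup a n = {mat 1}"
proof (intro equalityI subsetI)
  fix g assume "g \<in> symgroup a n"
  then have g: "rotation_matrix g" and comm: "\<And>l. l \<in> {1..n} \<Longrightarrow> g ** a l = a l ** g"
    unfolding symgroup_iff by auto
  let ?w = "ttr (tcross (a i) (a j))"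
  have "g *v ?w = ?w"
    using rotation_commute_fixes_ttr_tcross[OF g _ _ comm comm] sym ijk by simp
  moreover have "g *v (a k *v ?w) = a k *v ?w"
    using commute_matrix_vector_mult[OF comm[OF ijk(3)]] calculation by simp
  ultimately show "g \<in> {mat 1}" using rotation_fixing_noncollinear_eq_id[OF g _ _ moved] by simp
next
  fix g assume "g \<in> {mat 1 :: real^3^3}"
  then show "g \<in> symgroup a n" unfolding symgroup_iff using rotation_matrix_id by simp
qed

lemma rotation_fixing_axis3_eq_rotz:
  fixes g :: "real^3^3"
  assumes g: "rotation_matrix g" and fixes_axis: "g *v axis 3 1 = axis 3 1"
  obtains t where "g = rotz t"
proof -
  have col3: "g$1$3 = 0" "g$2$3 = 0" "g$3$3 = 1"
    using matrix_vector_mult_axis3[of g 1] matrix_vector_mult_axis3[of g 2]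
      matrix_vector_mult_axis3[of g 3]
    unfolding fixes_axis by simp_all
  then have "g$3$1 = 0" "g$3$2 = 0" using rotation_matrix_column_entries(5,6)[OF g] by simp_all
  then have "g \<in> O2" using O2_memberI g col3 by blast
  then obtain t where "g = rotz t \<or> g = rotz t ** diag3 1 (-1) (-1)" unfolding O2_def by blast
  moreover have "(rotz t ** diag3 1 (-1) (-1))$3$3 = -1" by (simp add: matrix_matrix_mult_entry3)
  ultimately show ?thesis using that col3(3) by force
qed

lemma rotz_commute_upper_block_scalar:
  fixes b :: "real^3^3"
  assumes "rotz t ** b = b ** rotz t" "transpose b = b" "sin t \<noteq> 0"
  shows "b$1$2 = 0" "b$2$2 = b$1$1"
proof -
  have "(rotz t ** b)$1$1 = (b ** rotz t)$1$1" "(rotz t ** b)$1$2 = (b ** rotz t)$1$2"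
    using assms(1) by simp_all
  then have "sin t * b$1$2 = 0" "sin t * (b$2$2 - b$1$1) = 0"
    using symmetric_matrix_entries[OF assms(2)]
    by (simp_all add: matrix_matrix_mult_entry3 algebra_simps) auto
  then show "b$1$2 = 0" "b$2$2 = b$1$1" using assms(3) by auto
qed

lemma ttr_tcross_blocks_parallel_axis3:
  fixes b c :: "real^3^3"
  assumes "transpose b = b" "transpose c = c"
    and "b$1$3 = 0 \<and> b$2$3 = 0" "c$1$3 = 0 \<and> c$2$3 = 0"
  shows "ttr (tcross b c) = ttr (tcross b c) $ 3 *\<^sub>R axis 3 1"
proof -
  have on_axis: "m *v axis 3 1 = m$3$3 *\<^sub>R axis 3 1" if "m$1$3 = 0 \<and> m$2$3 = 0" for m :: "real^3^3"
    using that by (simp add: vec_eq_iff forall_3 matrix_vector_mult_axis3)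
  have "(b ** c) *v axis 3 1 = (c ** b) *v axis 3 1"
    by (simp add: matrix_vector_mul_assoc[symmetric] on_axis[OF assms(3)] on_axis[OF assms(4)]
        matrix_vector_mult_scaleR mult.commute del: transpose_matrix_vector)
  then have "ttr (tcross b c) \<times> axis 3 1 = 0"
    by (simp add: cross_ttr_tcross[OF assms(1,2)] matrix_vector_mult_diff_rdistrib)
  then show ?thesis unfolding cross_axis3_eq_0_iff by (simp add: vec_eq_iff forall_3)
qed

lemma rotz_commute_noncommuting_blocks:
  fixes b c :: "real^3^3"
  assumes "rotz t ** b = b ** rotz t" "rotz t ** c = c ** rotz t"
    and "transpose b = b" "transpose c = c" "b$1$3 = 0 \<and> b$2$3 = 0" "c$1$3 = 0 \<and> c$2$3 = 0"
    and "b ** c \<noteq> c ** b"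
  shows "sin t = 0"
proof (rule ccontr)
  assume "sin t \<noteq> 0"
  then have "b$1$2 = 0" "b$2$2 = b$1$1" "c$1$2 = 0" "c$2$2 = c$1$1"
    using rotz_commute_upper_block_scalar assms(1-4) by blast+
  then have "b = diag3 (b$1$1) (b$1$1) (b$3$3)" "c = diag3 (c$1$1) (c$1$1) (c$3$3)"
    using symmetric_matrix_eq_diag3[of b] symmetric_matrix_eq_diag3[of c] assms(3-6) by auto
  then have "b ** c = c ** b" by (metis diag3_mult mult.commute)
  then show False using assms(7) by simp
qed

text \<open>A symmetry \<open>g\<close> fixes \<open>tr(b\<^sub>i \<times> b\<^sub>j)\<close>, which is a nonzero multiple of the \<open>z\<close>-axis; so \<open>g\<close>
  is a rotation about that axis, and as it commutes with the non-commuting upper blocks of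
  \<open>b\<^sub>i\<close> and \<open>b\<^sub>j\<close> its angle is \<open>0\<close> or \<open>\<pi>\<close>.\<close>

lemma symgroup_eq_Z2:
  assumes sym: "\<And>k. k \<in> {1..n} \<Longrightarrow> transpose (b k) = b k"
    and block: "\<And>k. k \<in> {1..n} \<Longrightarrow> b k $1$3 = 0 \<and> b k $2$3 = 0"
    and ij: "i \<in> {1..n}" "j \<in> {1..n}" and noncomm: "b i ** b j \<noteq> b j ** b i"
  shows "symgroup b n = Z2"
proof (intro equalityI subsetI)
  fix g assume "g \<in> symgroup b n"
  then have g: "rotation_matrix g" and comm: "\<And>k. k \<in> {1..n} \<Longrightarrow> g ** b k = b k ** g"
    unfolding symgroup_iff by auto
  note sym_ij = sym[OF ij(1)] sym[OF ij(2)]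
  obtain c where "ttr (tcross (b i) (b j)) = c *\<^sub>R axis 3 1"
    using ttr_tcross_blocks_parallel_axis3[OF sym_ij block[OF ij(1)] block[OF ij(2)]] by blast
  moreover have "ttr (tcross (b i) (b j)) \<noteq> 0"
    using noncomm ttr_tcross_eq_0_iff[OF sym_ij] by simp
  moreover have "g *v ttr (tcross (b i) (b j)) = ttr (tcross (b i) (b j))"
    using rotation_commute_fixes_ttr_tcross[OF g sym_ij comm comm] ij by simp
  ultimately have "g *v axis 3 1 = axis 3 1" by (simp add: matrix_vector_mult_scaleR)
  then obtain t where t: "g = rotz t" using rotation_fixing_axis3_eq_rotz[OF g] by blast
  then have "sin t = 0"
    using rotz_commute_noncommuting_blocks comm[OF ij(1)] comm[OF ij(2)] sym_ij
      block[OF ij(1)] block[OF ij(2)] noncomm by blast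
  then have "cos t = 1 \<or> cos t = -1" using sin_cos_squared_add[of t] by (simp add: power2_eq_1_iff)
  moreover have "rotz t = diag3 (cos t) (cos t) 1" using \<open>sin t = 0\<close> by (simp add: matrix_eq_iff3)
  ultimately show "g \<in> Z2" unfolding Z2_def mat1_eq_diag3 t by auto
next
  fix g assume "g \<in> Z2"
  then obtain e where g: "g = diag3 e e 1" and "e = 1 \<or> e = -1"
    unfolding Z2_def mat1_eq_diag3 by blast
  then have "rotation_matrix g" by (auto intro!: rotation_matrix_diag3)
  moreover have "g ** b k = b k ** g" if "k \<in> {1..n}" for k
    using block[OF that] symmetric_matrix_entries[OF sym[OF that]] unfolding g
    by (intro diag3_commute_block) simp_all
  ultimately show "g \<in> symgroup b n" unfolding symgroup_iff by blast
qed

section \<open>The five symmetry classes\<close>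

lemma conj_SO3_refl: "conj_SO3 X X"
  using conj_SO3I[OF rotation_matrix_id, of X X] by simp

lemma act2_image_SO3:
  assumes h: "rotation_matrix h"
  shows "act2 h ` SO3 = SO3"
proof (intro equalityI subsetI)
  fix g assume "g \<in> act2 h ` SO3"
  then show "g \<in> SO3" using act2_in_SO3_iff[OF h] by auto
next
  fix g assume "g \<in> SO3"
  then have "act2 (transpose h) g \<in> SO3"
    using act2_in_SO3_iff[OF rotation_matrix_transpose[OF h]] by simp
  moreover have "g = act2 h (act2 (transpose h) g)" using act2_transpose_act2(2)[OF h] by simp
  ultimately show "g \<in> act2 h ` SO3" by blast
qed

text \<open>Invariants under conjugation in \<open>SO(3)\<close> that separate the five symmetry classes.\<close>

definition conj_invariants :: "(real^3^3) set \<Rightarrow> bool \<times> bool \<times> nat" where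
  "conj_invariants X = (X = SO3, \<exists>g\<in>X. g ** g \<noteq> mat 1, card X)"

lemma conj_invariants_conj_SO3:
  assumes "conj_SO3 G X"
  shows "conj_invariants G = conj_invariants X"
proof -
  obtain h where h: "rotation_matrix h" and G: "G = act2 h ` X"
    using assms unfolding conj_SO3_def SO3_def act2_def by auto
  have "act2 (transpose h) ` G = X"
    using act2_transpose_act2(1)[OF h] unfolding G by (simp add: image_image)
  then have "G = SO3 \<longleftrightarrow> X = SO3"
    using G act2_image_SO3[OF h] act2_image_SO3[OF rotation_matrix_transpose[OF h]] by auto
  moreover have "act2 h g ** act2 h g = mat 1 \<longleftrightarrow> g ** g = mat 1" for g
    using act2_scalar[OF h, of 1] act2_inject[OF h, of "g ** g" "mat 1"]
    by (simp add: act2_mult[OF h, symmetric])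
  moreover have "inj_on (act2 h) X" using act2_inject[OF h] by (simp add: inj_on_def)
  ultimately show ?thesis unfolding conj_invariants_def G by (auto simp: card_image)
qed

lemma rotz_pi_half_square: "rotz (pi / 2) ** rotz (pi / 2) \<noteq> mat 1"
  unfolding matrix_eq_iff3 by (simp add: matrix_matrix_mult_entry3)

lemma O2_ne_SO3: "O2 \<noteq> SO3"
proof -
  have "cycle3 \<notin> O2" using O2_memberD by fastforce
  then show ?thesis using rotation_matrix_cycle3 unfolding SO3_def by blast
qed

lemma conj_invariants_classes:
  "conj_invariants SO3 = (True, True, card SO3)"
  "conj_invariants O2 = (False, True, card O2)"
  "conj_invariants D2 = (False, False, 4)"
  "conj_invariants Z2 = (False, False, 2)"
  "conj_invariants {mat 1} = (False, False, 1)"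
proof -
  have rotz: "rotz (pi / 2) \<in> O2" "rotz (pi / 2) \<in> SO3"
    unfolding O2_def SO3_def using rotation_matrix_rotz by blast+
  have D2: "\<forall>g\<in>D2. g ** g = mat 1" and Z2: "\<forall>g\<in>Z2. g ** g = mat 1"
    unfolding D2_def Z2_def by (simp_all add: mat1_eq_diag3 diag3_mult)
  then have "rotz (pi / 2) \<notin> D2" "rotz (pi / 2) \<notin> Z2" "rotz (pi / 2) \<notin> {mat 1}"
    using rotz_pi_half_square by auto
  then have "D2 \<noteq> SO3" "Z2 \<noteq> SO3" "{mat 1} \<noteq> SO3" using rotz(2) by blast+
  moreover have "card D2 = 4" "card Z2 = 2"
    unfolding D2_def Z2_def mat1_eq_diag3 by (simp_all add: diag3_eq_iff)
  ultimately show "conj_invariants SO3 = (True, True, card SO3)"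
    "conj_invariants O2 = (False, True, card O2)"
    "conj_invariants D2 = (False, False, 4)"
    "conj_invariants Z2 = (False, False, 2)"
    "conj_invariants {mat 1} = (False, False, 1)"
    unfolding conj_invariants_def using rotz rotz_pi_half_square O2_ne_SO3 D2 Z2 by auto
qed

lemma symmetry_classes_distinct: "distinct [SO3, O2, D2, Z2, {mat 1}]"
  using conj_invariants_classes by auto

lemma conj_SO3_symmetry_class_unique:
  assumes "conj_SO3 G X" "conj_SO3 G Y"
    and "X \<in> {SO3, O2, D2, Z2, {mat 1}}" "Y \<in> {SO3, O2, D2, Z2, {mat 1}}"
  shows "X = Y"
proof -
  have "conj_invariants X = conj_invariants Y"
    using conj_invariants_conj_SO3[OF assms(1)] conj_invariants_conj_SO3[OF assms(2)] by simp
  then show ?thesis using assms(3,4) conj_invariants_classes by auto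
qed

lemma conj_SO3_iff_criteria:
  assumes "C1 \<Longrightarrow> conj_SO3 G SO3" "C2 \<Longrightarrow> conj_SO3 G O2" "C3 \<Longrightarrow> conj_SO3 G D2"
    "C4 \<Longrightarrow> conj_SO3 G Z2" "\<not> C1 \<Longrightarrow> \<not> C2 \<Longrightarrow> \<not> C3 \<Longrightarrow> \<not> C4 \<Longrightarrow> conj_SO3 G {mat 1}"
  shows "(conj_SO3 G SO3 \<longleftrightarrow> C1) \<and> (conj_SO3 G O2 \<longleftrightarrow> C2) \<and> (conj_SO3 G D2 \<longleftrightarrow> C3)
    \<and> (conj_SO3 G Z2 \<longleftrightarrow> C4)"
proof -
  define cls where
    "cls = (if C1 then SO3 else if C2 then O2 else if C3 then D2 else if C4 then Z2 else {mat 1})"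
  have cls: "conj_SO3 G cls" "cls \<in> {SO3, O2, D2, Z2, {mat 1}}"
    using assms unfolding cls_def by auto
  have "conj_SO3 G X \<longleftrightarrow> cls = X" if "X \<in> {SO3, O2, D2, Z2, {mat 1}}" for X
    using conj_SO3_symmetry_class_unique[OF cls(1) _ cls(2) that] cls(1) by blast
  then have "conj_SO3 G SO3 \<longleftrightarrow> cls = SO3" "conj_SO3 G O2 \<longleftrightarrow> cls = O2"
    "conj_SO3 G D2 \<longleftrightarrow> cls = D2" "conj_SO3 G Z2 \<longleftrightarrow> cls = Z2"
    by simp_all
  moreover have "cls = SO3 \<Longrightarrow> C1" "cls = O2 \<Longrightarrow> C2" "cls = D2 \<Longrightarrow> C3" "cls = Z2 \<Longrightarrow> C4"
    using symmetry_classes_distinct unfolding cls_def by (auto split: if_splits)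
  ultimately show ?thesis using assms(1-4) by blast
qed

section \<open>The criteria\<close>

lemma tcross_diag3_eq_0_iff:
  "tcross (diag3 d1 d2 d3) (diag3 e1 e2 e3) = 0 \<longleftrightarrow> (d2 - d1) * (e3 - e1) = (d3 - d1) * (e2 - e1)"
proof -
  have form: "x \<bullet> (diag3 d1 d2 d3 *v x) \<times> (diag3 e1 e2 e3 *v x)
      = x$1 * x$2 * x$3 * ((d2 - d1) * (e3 - e1) - (d3 - d1) * (e2 - e1))" for x
    by (simp add: cross3_def inner_vec_def sum_3 matrix_vector_mult_entry3 algebra_simps)
  show ?thesis
  proof
    assume "tcross (diag3 d1 d2 d3) (diag3 e1 e2 e3) = 0"
    then have "vector [1, 1, 1] \<bullet> (diag3 d1 d2 d3 *v vector [1, 1, 1]) \<times>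
        (diag3 e1 e2 e3 *v vector [1, 1, 1]) = 0"
      unfolding tcross_eq_0_iff by blast
    then show "(d2 - d1) * (e3 - e1) = (d3 - d1) * (e2 - e1)" unfolding form by simp
  qed (simp add: tcross_eq_0_iff form)
qed

lemma tcross_diag3_square_eq_0_iff:
  "tcross (diag3 x y z) (diag3 x y z ** diag3 x y z) = 0 \<longleftrightarrow> x = y \<or> y = z \<or> z = x"
proof -
  have "(y - x) * (z * z - x * x) - (z - x) * (y * y - x * x) = (x - y) * (y - z) * (z - x)"
    by (simp add: algebra_simps)
  then have "(y - x) * (z * z - x * x) = (z - x) * (y * y - x * x) \<longleftrightarrow> (x - y) * (y - z) * (z - x) = 0"
    by (metis right_minus_eq)
  then show ?thesis unfolding diag3_mult tcross_diag3_eq_0_iff by auto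
qed

lemma tcross_diag3_ne_0_separates:
  assumes "tcross (diag3 d1 d2 d3) (diag3 e1 e2 e3) \<noteq> 0" "p \<noteq> q"
  shows "diag3 d1 d2 d3 $p$p \<noteq> diag3 d1 d2 d3 $q$q \<or> diag3 e1 e2 e3 $p$p \<noteq> diag3 e1 e2 e3 $q$q"
  using assms exhaust_3[of p] exhaust_3[of q] by (auto simp: tcross_diag3_eq_0_iff)

text \<open>Testing \<open>x \<bullet> (a x \<times> B x) = 0\<close> at four vectors forces \<open>B\<close> to share the axis of the
  uniaxial \<open>a\<close>.\<close>

lemma tcross_uniaxial_eq_0:
  fixes B :: "real^3^3"
  assumes sym: "transpose B = B" and "p \<noteq> q" and tc: "tcross (diag3 p p q) B = 0"
  shows "B = diag3 (B$1$1) (B$1$1) (B$3$3)"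
proof -
  have Q: "x \<bullet> (diag3 p p q *v x) \<times> (B *v x) = 0" for x using tc unfolding tcross_eq_0_iff by blast
  note s = symmetric_matrix_entries[OF sym]
  have "(q - p) * (B$1$2 + B$1$3) = 0" "(q - p) * (B$1$2 - B$1$3) = 0"
    "(q - p) * (B$1$2 + B$2$3) = 0" "(q - p) * (B$1$1 + B$1$3 - B$2$2 - B$2$3) = 0"
    using Q[of "vector [0, 1, 1]"] Q[of "vector [0, -1, 1]"] Q[of "vector [1, 0, 1]"]
      Q[of "vector [1, 1, 1]"]
    by (simp_all add: cross3_def inner_vec_def sum_3 matrix_vector_mult_entry3 s algebra_simps)
  then have "B$1$2 + B$1$3 = 0" "B$1$2 - B$1$3 = 0" "B$1$2 + B$2$3 = 0"
    "B$1$1 + B$1$3 - B$2$2 - B$2$3 = 0"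
    using \<open>p \<noteq> q\<close> by simp_all
  then have "B$1$2 = 0" "B$1$3 = 0" "B$2$3 = 0" "B$2$2 = B$1$1" by linarith+
  then show ?thesis using s by (simp add: matrix_eq_iff3)
qed

lemma symgroup_conj_O2I:
  assumes sym: "\<forall>k\<in>{1..n}. transpose (a k) = a k" and j: "j \<in> {1..n}"
    and dev: "dev (a j) \<noteq> 0" and square: "tcross (a j) (a j ** a j) = 0"
    and coaxial: "\<forall>k\<in>{1..n}. tcross (a j) (a k) = 0"
  shows "conj_SO3 (symgroup a n) O2"
proof -
  have "transpose (a j) = a j" using sym j by blast
  then obtain h x y z where h: "rotation_matrix h" and hd: "act2 (transpose h) (a j) = diag3 x y z"
    and "z \<noteq> x" "z \<noteq> y"
    by (rule symmetric_matrix_diagonalize_simple_last[OF _ dev])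
  have hT: "rotation_matrix (transpose h)" using rotation_matrix_transpose[OF h] .
  let ?b = "\<lambda>k. act2 (transpose h) (a k)"
  have "tcross (diag3 x y z) (diag3 x y z ** diag3 x y z) = 0"
    using square tcross_act2_eq_0_iff[OF hT, of "a j" "a j ** a j"] by (simp add: act2_mult[OF hT] hd)
  then have "y = x" using \<open>z \<noteq> x\<close> \<open>z \<noteq> y\<close> unfolding tcross_diag3_square_eq_0_iff by auto
  have "x \<noteq> z" using \<open>z \<noteq> x\<close> by simp
  have uniaxial: "\<forall>k\<in>{1..n}. \<exists>p q. ?b k = diag3 p p q"
  proof
    fix k assume k: "k \<in> {1..n}"
    have "tcross (diag3 x x z) (?b k) = 0"
      using coaxial k tcross_act2_eq_0_iff[OF hT, of "a j" "a k"] hd \<open>y = x\<close> by simp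
    moreover have "transpose (?b k) = ?b k" using sym k by (simp add: transpose_act2)
    ultimately have "?b k = diag3 (?b k $1$1) (?b k $1$1) (?b k $3$3)"
      using tcross_uniaxial_eq_0[OF _ \<open>x \<noteq> z\<close>] by blast
    then show "\<exists>p q. ?b k = diag3 p p q" by blast
  qed
  have "?b j = diag3 x x z" using hd \<open>y = x\<close> by simp
  then have "symgroup ?b n = O2" using symgroup_eq_O2[OF uniaxial j] \<open>x \<noteq> z\<close> by blast
  then show ?thesis by (rule conj_SO3_symgroup_act2[OF h])
qed

lemma symgroup_conj_D2I:
  assumes sym: "\<forall>k\<in>{1..n}. transpose (a k) = a k"
    and axial_0: "\<forall>k\<in>{1..n}. \<forall>l\<in>{1..n}. ttr (tcross (a k) (a l)) = 0"
    and nonuniaxial: "(\<exists>j\<in>{1..n}. tcross (a j) (a j ** a j) \<noteq> 0)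
      \<or> (\<exists>i\<in>{1..n}. \<exists>j\<in>{1..n}. tcross (a i) (a j) \<noteq> 0)"
  shows "conj_SO3 (symgroup a n) D2"
proof -
  have sym_image: "\<And>c. c \<in> a ` {1..n} \<Longrightarrow> transpose c = c"
    and comm_image: "\<And>c d. c \<in> a ` {1..n} \<Longrightarrow> d \<in> a ` {1..n} \<Longrightarrow> c ** d = d ** c"
    using sym axial_0 ttr_tcross_eq_0_iff by auto
  obtain h where h: "rotation_matrix h"
    and diag_image: "\<And>c. c \<in> a ` {1..n} \<Longrightarrow> \<exists>x y z. act2 (transpose h) c = diag3 x y z"
    using commuting_symmetric_simultaneous_diagonalization[OF sym_image comm_image] by blast
  have hT: "rotation_matrix (transpose h)" using rotation_matrix_transpose[OF h] .
  let ?b = "\<lambda>k. act2 (transpose h) (a k)"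
  have diag: "\<forall>k\<in>{1..n}. \<exists>x y z. ?b k = diag3 x y z" using diag_image[OF imageI] by blast
  have tcross_b: "tcross (?b i) (?b j) = 0 \<longleftrightarrow> tcross (a i) (a j) = 0" for i j
    using tcross_act2_eq_0_iff[OF hT] .
  have "\<exists>k\<in>{1..n}. ?b k $p$p \<noteq> ?b k $q$q" if "p \<noteq> q" for p q
    using nonuniaxial
  proof (elim disjE bexE)
    fix j assume j: "j \<in> {1..n}" "tcross (a j) (a j ** a j) \<noteq> 0"
    obtain x y z where "?b j = diag3 x y z" using diag j(1) by blast
    moreover have "tcross (?b j) (?b j ** ?b j) \<noteq> 0"
      using j(2) tcross_act2_eq_0_iff[OF hT, of "a j" "a j ** a j"] by (simp add: act2_mult[OF hT])
    ultimately have "x \<noteq> y \<and> y \<noteq> z \<and> z \<noteq> x" by (simp add: tcross_diag3_square_eq_0_iff)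
    then have "?b j $p$p \<noteq> ?b j $q$q"
      using \<open>?b j = diag3 x y z\<close> \<open>p \<noteq> q\<close> exhaust_3[of p] exhaust_3[of q] by auto
    then show ?thesis using j(1) by blast
  next
    fix i j assume ij: "i \<in> {1..n}" "j \<in> {1..n}" "tcross (a i) (a j) \<noteq> 0"
    obtain x y z x' y' z' where bi: "?b i = diag3 x y z" and bj: "?b j = diag3 x' y' z'"
      using diag ij(1,2) by blast
    then have "tcross (diag3 x y z) (diag3 x' y' z') \<noteq> 0" using ij(3) tcross_b[of i j] by simp
    then have "?b i $p$p \<noteq> ?b i $q$q \<or> ?b j $p$p \<noteq> ?b j $q$q"
      unfolding bi bj using tcross_diag3_ne_0_separates \<open>p \<noteq> q\<close> by blast
    then show ?thesis using ij(1,2) by blast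
  qed
  then have "symgroup ?b n = D2" by (rule symgroup_eq_D2[OF diag])
  then show ?thesis by (rule conj_SO3_symgroup_act2[OF h])
qed

text \<open>Rotating the unit vector along \<open>\<omega>\<close> to the \<open>z\<close>-axis makes every \<open>a\<^sub>k\<close> block diagonal.\<close>

lemma symgroup_conj_Z2I:
  assumes sym: "\<forall>k\<in>{1..n}. transpose (a k) = a k" and ij: "i \<in> {1..n}" "j \<in> {1..n}"
    and w: "ttr (tcross (a i) (a j)) \<noteq> 0"
    and axial: "\<forall>k\<in>{1..n}. (a k *v ttr (tcross (a i) (a j))) \<times> ttr (tcross (a i) (a j)) = 0"
  shows "conj_SO3 (symgroup a n) Z2"
proof -
  define u where "u = (1 / norm (ttr (tcross (a i) (a j)))) *\<^sub>R ttr (tcross (a i) (a j))"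
  have "norm u = 1" using w by (simp add: u_def)
  then obtain h where h: "rotation_matrix h" and hu: "h *v axis 3 1 = u"
    using rotation_matrix_exists_basis[of u 3] by auto
  have hT: "rotation_matrix (transpose h)" using rotation_matrix_transpose[OF h] .
  let ?b = "\<lambda>k. act2 (transpose h) (a k)"
  have "?b k $1$3 = 0 \<and> ?b k $2$3 = 0" if k: "k \<in> {1..n}" for k
  proof -
    have "(a k *v u) \<times> u = 0"
      using axial k by (simp add: u_def matrix_vector_mult_scaleR cross_mult_left cross_mult_right)
    moreover have "?b k *v axis 3 1 = transpose h *v (a k *v u)"
      by (simp add: act2_def hu[symmetric] matrix_vector_mul_assoc matrix_mul_assoc
          del: transpose_matrix_vector)
    moreover have "transpose h *v u = axis 3 1"
      using rotation_matrix_inverse_vec(2)[OF h, of "axis 3 1"] hu by simp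
    ultimately have "(?b k *v axis 3 1) \<times> axis 3 1 = transpose h *v ((a k *v u) \<times> u)"
      using cross_rotation_matrix[OF hT, of "a k *v u" u] by (simp del: transpose_matrix_vector)
    also have "\<dots> = 0" using \<open>(a k *v u) \<times> u = 0\<close> by simp
    finally show ?thesis by (simp add: cross_axis3_eq_0_iff matrix_vector_mult_axis3)
  qed
  moreover have "?b i ** ?b j \<noteq> ?b j ** ?b i"
    using w ttr_tcross_eq_0_iff sym ij act2_commute_iff[OF hT] by simp
  ultimately have "symgroup ?b n = Z2"
    using symgroup_eq_Z2[of n ?b i j] sym ij by (simp add: transpose_act2)
  then show ?thesis by (rule conj_SO3_symgroup_act2[OF h])
qed

theorem theorem8p6:
  fixes a :: "nat \<Rightarrow> real^3^3" and n :: nat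
  assumes sym: "\<forall>k\<in>{1..n}. transpose (a k) = a k"
  shows "(isotropic a n \<longleftrightarrow> (\<forall>k\<in>{1..n}. dev (a k) = 0))
   \<and> (transversely_isotropic a n \<longleftrightarrow>
        (\<exists>j\<in>{1..n}. dev (a j) \<noteq> 0 \<and> tcross (a j) (a j ** a j) = 0
           \<and> (\<forall>k\<in>{1..n}. tcross (a j) (a k) = 0)))
   \<and> (orthotropic a n \<longleftrightarrow>
        (\<forall>k\<in>{1..n}. \<forall>l\<in>{1..n}. ttr (tcross (a k) (a l)) = 0)
        \<and> ((\<exists>j\<in>{1..n}. tcross (a j) (a j ** a j) \<noteq> 0)
           \<or> (\<exists>i\<in>{1..n}. \<exists>j\<in>{1..n}. tcross (a i) (a j) \<noteq> 0)))
   \<and> (monoclinic a n \<longleftrightarrow>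
        (\<exists>i\<in>{1..n}. \<exists>j\<in>{1..n}. ttr (tcross (a i) (a j)) \<noteq> 0
           \<and> (\<forall>k\<in>{1..n}. cross3 (a k *v ttr (tcross (a i) (a j))) (ttr (tcross (a i) (a j))) = 0)))"
  unfolding isotropic_def transversely_isotropic_def orthotropic_def monoclinic_def
proof (rule conj_SO3_iff_criteria)
  assume "\<not> (\<forall>k\<in>{1..n}. dev (a k) = 0)"
    and "\<not> (\<exists>j\<in>{1..n}. dev (a j) \<noteq> 0 \<and> tcross (a j) (a j ** a j) = 0
           \<and> (\<forall>k\<in>{1..n}. tcross (a j) (a k) = 0))"
    and "\<not> ((\<forall>k\<in>{1..n}. \<forall>l\<in>{1..n}. ttr (tcross (a k) (a l)) = 0)
        \<and> ((\<exists>j\<in>{1..n}. tcross (a j) (a j ** a j) \<noteq> 0)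
           \<or> (\<exists>i\<in>{1..n}. \<exists>j\<in>{1..n}. tcross (a i) (a j) \<noteq> 0)))"
    and no_Z2: "\<not> (\<exists>i\<in>{1..n}. \<exists>j\<in>{1..n}. ttr (tcross (a i) (a j)) \<noteq> 0
           \<and> (\<forall>k\<in>{1..n}. (a k *v ttr (tcross (a i) (a j))) \<times> ttr (tcross (a i) (a j)) = 0))"
  txt \<open>If all \<open>tr(a\<^sub>i \<times> a\<^sub>j)\<close> vanished, the failure of the orthotropic criterion would make
    every non-spherical \<open>a\<^sub>j\<close> meet the transversely isotropic one.\<close>
  then have "\<exists>i\<in>{1..n}. \<exists>j\<in>{1..n}. ttr (tcross (a i) (a j)) \<noteq> 0" by blast
  then obtain i j k where "i \<in> {1..n}" "j \<in> {1..n}" "k \<in> {1..n}"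
    and "(a k *v ttr (tcross (a i) (a j))) \<times> ttr (tcross (a i) (a j)) \<noteq> 0"
    using no_Z2 by blast
  then show "conj_SO3 (symgroup a n) {mat 1}"
    using symgroup_eq_trivial[OF sym] conj_SO3_refl by metis
next
  show "\<forall>k\<in>{1..n}. dev (a k) = 0 \<Longrightarrow> conj_SO3 (symgroup a n) SO3"
    by (simp add: symgroup_eq_SO3 conj_SO3_refl)
qed (use symgroup_conj_O2I[OF sym] symgroup_conj_D2I[OF sym] symgroup_conj_Z2I[OF sym] in blast)+

end
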